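(* Let $q$ be a prime power and let $m,r,k,\alpha$ be positive integers. If $(\Sigma,\mathcal{A})$ with $\Sigma=\mathrm{PG}(m-1,q)$ is an $(m;\,r+1,\,k,\,r,\,\alpha,\,1)$-functional repair code, then $$m\le \sum_{i=1}^{k}\min\bigl(\alpha,\,(r-k)+i\bigr).$$
   Context: Dimensions are projective: a $(d-1)$-dimensional subspace of $\mathrm{PG}(m-1,q)$ corresponds to a $d$-dimensional subspace of $\mathbb{F}_q^m$, and $\langle\cdot\rangle$ denotes span. A subspace $U'$ of $\Sigma=\mathrm{PG}(m-1,q)$ is obtained from a set $\mathcal{U}$ of subspaces of $\Sigma$ by $(r,\beta)$-repair if there are $r$ distinct members $U_{i_1},\dots,U_{i_r}$ of $\mathcal{U}$ and, for each $j$, a $(\beta-1)$-dimensional subspace $W_{i_j}\subseteq U_{i_j}$ such that $U'\subseteq\langle W_{i_1},\dots,W_{i_r}\rangle$. An $(m;n,k,r,\alpha,\beta)$-functional repair code is a pair $(\Sigma,\mathcal{A})$ where $\Sigma=\mathrm{PG}(m-1,q)$ and $\mathcal{A}$ is a collection of $(n-1)$-sets of $(\alpha-1)$-dimensional subspaces of $\Sigma$ such that: (Recovery) every $\mathcal{U}\in\mathcal{A}$ contains $k$ members whose span is $\Sigma$; (Repair) for every $\mathcal{U}=\{U_1,\dots,U_{n-1}\}\in\mathcal{A}$ there is an $(\alpha-1)$-dimensional subspace $U_n$ obtained from $\mathcal{U}$ by $(r,\beta)$-repair such that $\mathcal{U}\cup\{U_n\}\setminus\{U_i\}\in\mathcal{A}$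 for every $i=1,\dots,n-1$. Standing assumptions: $m,n\ge2$, $1\le k<n$, $k\le r\le n-1$, $1\le\alpha\le m-1$, $1\le\beta\le\alpha$. *)

theory Defs
  imports "HOL-Analysis.Analysis"
begin

text \<open>Sigma = PG(m-1,q) is modelled by the vector space 'a^'n over a finite field 'a
  (q = CARD('a)), with m = CARD('n). A projective (d-1)-dimensional subspace is a
  d-dimensional vector subspace.\<close>

definition pg_sub :: "nat \<Rightarrow> ('a::field ^ 'n) set \<Rightarrow> bool" where
  "pg_sub d U \<longleftrightarrow> vec.subspace U \<and> vec.dim U = d"

definition repair_obtained ::
  "nat \<Rightarrow> nat \<Rightarrow> ('a::field ^ 'n) set set \<Rightarrow> ('a ^ 'n) set \<Rightarrow> bool" where
  "repair_obtained r \<beta> UU U' \<longleftrightarrow>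
     (\<exists>S W. S \<subseteq> UU \<and> card S = r \<and>
        (\<forall>V\<in>S. W V \<subseteq> V \<and> pg_sub \<beta> (W V)) \<and>
        U' \<subseteq> vec.span (\<Union>V\<in>S. W V))"

definition functional_repair_code ::
  "nat \<Rightarrow> nat \<Rightarrow> nat \<Rightarrow> nat \<Rightarrow> nat \<Rightarrow> nat \<Rightarrow> ('a::{field,finite} ^ 'n) set set set \<Rightarrow> bool" where
  "functional_repair_code m n k r \<alpha> \<beta> A \<longleftrightarrow>
     m = CARD('n) \<and> m \<ge> 2 \<and> n \<ge> 2 \<and> 1 \<le> k \<and> k < n \<and> k \<le> r \<and> r \<le> n - 1 \<and>
     1 \<le> \<alpha> \<and> \<alpha> \<le> m - 1 \<and> 1 \<le> \<beta> \<and> \<beta> \<le> \<alpha> \<and>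
     A \<noteq> {} \<and>
     (\<forall>UU\<in>A. finite UU \<and> card UU = n - 1 \<and> (\<forall>U\<in>UU. pg_sub \<alpha> U)) \<and>
     (\<forall>UU\<in>A. \<exists>S\<subseteq>UU. card S = k \<and> vec.span (\<Union>S) = UNIV) \<and>
     (\<forall>UU\<in>A. \<exists>Unew. pg_sub \<alpha> Unew \<and> repair_obtained r \<beta> UU Unew \<and>
        (\<forall>Ui\<in>UU. (UU \<union> {Unew}) - {Ui} \<in> A))"

end

theory Submission
  imports Defs
begin

text \<open>Repair the code r times, each time discarding a node that has not been repaired yet.
  After t repairs there are t fresh nodes, and any T of them span at most
  \<open>\<Sum>i=1..|T|. min \<alpha> (r + 1 - i)\<close> dimensions: the newest member of T was built inside
  the span of one point from each of the r other nodes present at that time, and the older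
  members of T are among these nodes, so it adds at most \<open>min \<alpha> (r - (|T| - 1))\<close>
  dimensions. After r repairs every node is fresh, and the k nodes that span the whole
  space give the bound.\<close>

context finite_dimensional_vector_space
begin

lemma dim_Un_le: "dim (A \<union> B) \<le> dim A + dim B"
proof -
  obtain BA where BA: "independent BA" "A \<subseteq> span BA" "card BA = dim A"
    using basis_exists by metis
  obtain BB where BB: "independent BB" "B \<subseteq> span BB" "card BB = dim B"
    using basis_exists by metis
  have "A \<union> B \<subseteq> span (BA \<union> BB)"
    using BA(2) BB(2) span_mono[of BA "BA \<union> BB"] span_mono[of BB "BA \<union> BB"] by blast
  moreover have "finite (BA \<union> BB)"
    using finiteI_independent[OF BA(1)] finiteI_independent[OF BB(1)] by simp
  ultimately have "dim (A \<union> B) \<le> card (BA \<union> BB)"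
    by (rule dim_le_card)
  also have "\<dots> \<le> card BA + card BB"
    by (rule card_Un_le)
  finally show ?thesis
    using BA(3) BB(3) by simp
qed

lemma dim_UN_le:
  assumes "finite I"
  shows "dim (\<Union>i\<in>I. W i) \<le> (\<Sum>i\<in>I. dim (W i))"
  using assms
proof (induction I rule: finite_induct)
  case empty
  then show ?case by simp
next
  case (insert i I)
  have "dim (\<Union>j\<in>insert i I. W j) \<le> dim (W i) + dim (\<Union>j\<in>I. W j)"
    using dim_Un_le by simp
  with insert show ?case by simp
qed

lemma dim_Un_span_pieces_le:
  assumes "finite I" "T \<subseteq> I" "\<forall>V\<in>T. W V \<subseteq> V" "U \<subseteq> span (\<Union>V\<in>I. W V)"
  shows "dim (\<Union>T \<union> U) \<le> dim (\<Union>T) + (\<Sum>V\<in>I - T. dim (W V))"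
proof -
  have "(\<Union>V\<in>I. W V) \<subseteq> \<Union>T \<union> (\<Union>V\<in>I - T. W V)"
    using assms(3) by blast
  then have "span (\<Union>V\<in>I. W V) \<subseteq> span (\<Union>T \<union> (\<Union>V\<in>I - T. W V))"
    by (rule span_mono)
  moreover have "\<Union>T \<union> (\<Union>V\<in>I - T. W V) \<subseteq> span (\<Union>T \<union> (\<Union>V\<in>I - T. W V))"
    by (rule span_superset)
  ultimately have "\<Union>T \<union> U \<subseteq> span (\<Union>T \<union> (\<Union>V\<in>I - T. W V))"
    using assms(4) by blast
  then have "dim (\<Union>T \<union> U) \<le> dim (\<Union>T \<union> (\<Union>V\<in>I - T. W V))"
    by (rule dim_mono)
  also have "\<dots> \<le> dim (\<Union>T) + dim (\<Union>V\<in>I - T. W V)"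
    by (rule dim_Un_le)
  also have "\<dots> \<le> dim (\<Union>T) + (\<Sum>V\<in>I - T. dim (W V))"
    using dim_UN_le[OF finite_Diff[OF assms(1)]] by (rule add_left_mono)
  finally show ?thesis .
qed

end

definition repair_dim_bound :: "nat \<Rightarrow> nat \<Rightarrow> nat \<Rightarrow> nat" where
  "repair_dim_bound \<alpha> r s = (\<Sum>i=1..s. min \<alpha> (r + 1 - i))"

lemma repair_dim_bound_Suc:
  "repair_dim_bound \<alpha> r (Suc s) = repair_dim_bound \<alpha> r s + min \<alpha> (r - s)"
  unfolding repair_dim_bound_def by simp

lemma repair_dim_bound_reversed:
  assumes "k \<le> r"
  shows "repair_dim_bound \<alpha> r k = (\<Sum>i=1..k. min \<alpha> ((r - k) + i))"
proof -
  have "repair_dim_bound \<alpha> r k = (\<Sum>i=1..k. min \<alpha> (r + 1 - (k + 1 - i)))"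
    unfolding repair_dim_bound_def by (rule sum.atLeastAtMost_rev)
  also have "\<dots> = (\<Sum>i=1..k. min \<alpha> ((r - k) + i))"
    using assms by (intro sum.cong) auto
  finally show ?thesis .
qed

definition repair_bounded :: "nat \<Rightarrow> nat \<Rightarrow> ('a::field ^ 'n) set set \<Rightarrow> bool" where
  "repair_bounded \<alpha> r N \<longleftrightarrow> (\<forall>T\<subseteq>N. vec.dim (\<Union>T) \<le> repair_dim_bound \<alpha> r (card T))"

lemma repair_bounded_insert:
  fixes U :: "('a::field ^ 'n) set"
  assumes bounded: "repair_bounded \<alpha> r N"
    and N: "N \<subseteq> UU" and UU: "finite UU" "card UU = r"
    and W: "\<forall>V\<in>UU. W V \<subseteq> V \<and> vec.dim (W V) = 1"
    and U: "vec.dim U \<le> \<alpha>" "U \<subseteq> vec.span (\<Union>V\<in>UU. W V)"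
  shows "repair_bounded \<alpha> r (insert U N)"
  unfolding repair_bounded_def
proof (intro allI impI)
  fix T assume T: "T \<subseteq> insert U N"
  show "vec.dim (\<Union>T) \<le> repair_dim_bound \<alpha> r (card T)"
  proof (cases "U \<in> T")
    case False
    then show ?thesis
      using T bounded unfolding repair_bounded_def by blast
  next
    case True
    define T0 where "T0 = T - {U}"
    have T_eq: "T = insert U T0" and "U \<notin> T0"
      using True unfolding T0_def by auto
    have T0: "T0 \<subseteq> N" "T0 \<subseteq> UU"
      using T N unfolding T0_def by blast+
    then have "finite T0"
      using UU(1) finite_subset by blast
    have bound_T0: "vec.dim (\<Union>T0) \<le> repair_dim_bound \<alpha> r (card T0)"
      using T0(1) bounded unfolding repair_bounded_def by blast
    have "vec.dim (\<Union>T0 \<union> U) \<le> vec.dim (\<Union>T0) + vec.dim U"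
      by (rule vec.dim_Un_le)
    moreover have "vec.dim (\<Union>T0 \<union> U) \<le> vec.dim (\<Union>T0) + (\<Sum>V\<in>UU - T0. vec.dim (W V))"
      using T0(2) UU(1) W U(2) by (intro vec.dim_Un_span_pieces_le) auto
    moreover have "(\<Sum>V\<in>UU - T0. vec.dim (W V)) = (\<Sum>V\<in>UU - T0. 1)"
      using W T0(2) by (intro sum.cong) auto
    moreover have "(\<Sum>V\<in>UU - T0. 1) = r - card T0"
      using T0(2) \<open>finite T0\<close> UU by (simp add: card_Diff_subset)
    ultimately have "vec.dim (\<Union>T0 \<union> U) \<le> repair_dim_bound \<alpha> r (card T0) + min \<alpha> (r - card T0)"
      using bound_T0 U(1) by (auto simp: min_def)
    then show ?thesis
      using T_eq \<open>U \<notin> T0\<close> \<open>finite T0\<close> by (simp add: repair_dim_bound_Suc Un_commute)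
  qed
qed

lemma functional_repair_codeD:
  fixes A :: "('a::{field,finite} ^ 'n) set set set"
  assumes "functional_repair_code m n k r \<alpha> \<beta> A"
  shows "m = CARD('n)" "k \<le> r" "A \<noteq> {}"
    and "\<forall>UU\<in>A. finite UU \<and> card UU = n - 1 \<and> (\<forall>U\<in>UU. pg_sub \<alpha> U)"
    and "\<forall>UU\<in>A. \<exists>S\<subseteq>UU. card S = k \<and> vec.span (\<Union>S) = UNIV"
    and "\<forall>UU\<in>A. \<exists>U. pg_sub \<alpha> U \<and> repair_obtained r \<beta> UU U \<and>
      (\<forall>V\<in>UU. (UU \<union> {U}) - {V} \<in> A)"
  using assms unfolding functional_repair_code_def by - (elim conjE, assumption)+

lemma repair_step:
  fixes A :: "('a::{field,finite} ^ 'n) set set set"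
  assumes code: "functional_repair_code m (r + 1) k r \<alpha> 1 A"
    and UU: "UU \<in> A" and N: "N \<subseteq> UU" "card N < r" "repair_bounded \<alpha> r N"
  shows "\<exists>UU'\<in>A. \<exists>N'\<subseteq>UU'. card N' = Suc (card N) \<and> repair_bounded \<alpha> r N'"
proof -
  have members: "finite X \<and> card X = r \<and> (\<forall>V\<in>X. pg_sub \<alpha> V)" if "X \<in> A" for X
    using functional_repair_codeD(4)[OF code] that by simp
  obtain U where U: "pg_sub \<alpha> U" "repair_obtained r 1 UU U"
    and replace: "\<forall>V\<in>UU. (UU \<union> {U}) - {V} \<in> A"
    using functional_repair_codeD(6)[OF code] UU by blast
  obtain S W where S: "S \<subseteq> UU" "card S = r" "\<forall>V\<in>S. W V \<subseteq> V \<and> pg_sub 1 (W V)"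
    "U \<subseteq> vec.span (\<Union>V\<in>S. W V)"
    using U(2) unfolding repair_obtained_def by blast
  have S_eq: "S = UU"
    using card_subset_eq[OF _ S(1)] S(2) members[OF UU] by simp
  have "N \<noteq> UU"
    using N(2) members[OF UU] by auto
  then obtain V where V: "V \<in> UU" "V \<notin> N"
    using N(1) by blast
  have "U \<notin> UU"
  proof
    assume "U \<in> UU"
    then have "card ((UU \<union> {U}) - {V}) = r - 1"
      using V(1) members[OF UU] by (simp add: insert_absorb)
    moreover have "card ((UU \<union> {U}) - {V}) = r"
      using members[OF replace[rule_format, OF V(1)]] by blast
    ultimately show False
      using N(2) by simp
  qed
  have "finite N"
    using N(1) members[OF UU] finite_subset by blast
  moreover have "U \<notin> N"
    using N(1) \<open>U \<notin> UU\<close> by blast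
  ultimately have "card (insert U N) = Suc (card N)"
    by simp
  moreover have "insert U N \<subseteq> (UU \<union> {U}) - {V}"
    using N(1) V \<open>U \<notin> UU\<close> by auto
  moreover have "repair_bounded \<alpha> r (insert U N)"
    using N(1,3) members[OF UU] S(3,4) U(1) unfolding S_eq pg_sub_def
    by (intro repair_bounded_insert) auto
  ultimately show ?thesis
    using replace V(1) by blast
qed

lemma repair_bounded_exists:
  fixes A :: "('a::{field,finite} ^ 'n) set set set"
  assumes code: "functional_repair_code m (r + 1) k r \<alpha> 1 A"
  shows "t \<le> r \<Longrightarrow> \<exists>UU\<in>A. \<exists>N\<subseteq>UU. card N = t \<and> repair_bounded \<alpha> r N"
proof (induction t)
  case 0
  have "A \<noteq> {}"
    using functional_repair_codeD(3)[OF code] .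
  moreover have "repair_bounded \<alpha> r {}"
    unfolding repair_bounded_def by simp
  ultimately show ?case
    by auto
next
  case (Suc t)
  then obtain UU N where "UU \<in> A" "N \<subseteq> UU" "card N = t" "repair_bounded \<alpha> r N"
    by auto
  then show ?case
    using Suc.prems repair_step[OF code, of UU N] by simp
qed

theorem mainTheorem1:
  fixes A :: "('a::{field,finite} ^ 'n) set set set"
    and m r k \<alpha> :: nat
  assumes "0 < m" "0 < r" "0 < k" "0 < \<alpha>"
    and "functional_repair_code m (r + 1) k r \<alpha> 1 A"
  shows "m \<le> (\<Sum>i=1..k. min \<alpha> ((r - k) + i))"
proof -
  note code = \<open>functional_repair_code m (r + 1) k r \<alpha> 1 A\<close>
  have params: "m = CARD('n)" "k \<le> r"
    and members: "\<forall>UU\<in>A. finite UU \<and> card UU = r"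
    and recovery: "\<forall>UU\<in>A. \<exists>S\<subseteq>UU. card S = k \<and> vec.span (\<Union>S) = UNIV"
    using functional_repair_codeD[OF code] by simp_all
  obtain UU N where UU: "UU \<in> A" and N: "N \<subseteq> UU" "card N = r" "repair_bounded \<alpha> r N"
    using repair_bounded_exists[OF code, of r] by blast
  have "N = UU"
    using card_subset_eq[OF _ N(1)] N(2) members UU by simp
  obtain S where S: "S \<subseteq> N" "card S = k" "vec.span (\<Union>S) = UNIV"
    using recovery UU \<open>N = UU\<close> by blast
  have "m = vec.dim (UNIV :: ('a ^ 'n) set)"
    by (simp only: params(1) vec_dim_card)
  also have "\<dots> = vec.dim (\<Union>S)"
    using vec.dim_span[of "\<Union>S"] S(3) by simp
  also have "\<dots> \<le> repair_dim_bound \<alpha> r k"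
    using N(3) S(1,2) unfolding repair_bounded_def by blast
  also have "\<dots> = (\<Sum>i=1..k. min \<alpha> ((r - k) + i))"
    using params(2) by (rule repair_dim_bound_reversed)
  finally show ?thesis .
qed

end
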